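(* Let $G$ be a group with a symmetric, finitely supported generating probability measure $\mu$, and suppose that $(G,\mu)$ admits at least one non-constant positive harmonic function. Then the set of positive harmonic functions on $(G,\mu)$ spans an infinite-dimensional real vector space.
   Context: $\mu$ is generating if the semigroup generated by $\operatorname{supp}\mu$ is $G$, symmetric if $\mu(g)=\mu(g^{-1})$. $f:G\to\mathbb{R}$ is harmonic if $f(x)=\sum_{s\in\operatorname{supp}\mu}\mu(s)f(xs)$ for all $x$; it is positive if it takes only positive values. *)

theory Defs
  imports "HOL-Analysis.Analysis" "HOL-Library.Function_Algebras"
begin

(* Groups are written additively via the type class group_add
   (NOT assumed commutative): the group product x s is written x + s,
   the inverse g^-1 is -g. *)

definition supp_meas :: "('a \<Rightarrow> real) \<Rightarrow> 'a set" where
  "supp_meas \<mu> = {g. \<mu> g \<noteq> 0}"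

definition prob_measure_on_group :: "('a \<Rightarrow> real) \<Rightarrow> bool" where
  "prob_measure_on_group \<mu> \<longleftrightarrow> (\<forall>g. \<mu> g \<ge> 0) \<and> finite (supp_meas \<mu>)
     \<and> (\<Sum>g\<in>supp_meas \<mu>. \<mu> g) = 1"

inductive_set sgrp_gen :: "'a::group_add set \<Rightarrow> 'a set" for S where
  base: "s \<in> S \<Longrightarrow> s \<in> sgrp_gen S"
| step: "x \<in> sgrp_gen S \<Longrightarrow> s \<in> S \<Longrightarrow> x + s \<in> sgrp_gen S"

definition generating :: "('a::group_add \<Rightarrow> real) \<Rightarrow> bool" where
  "generating \<mu> \<longleftrightarrow> sgrp_gen (supp_meas \<mu>) = UNIV"

definition symmetric_meas :: "('a::group_add \<Rightarrow> real) \<Rightarrow> bool" where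
  "symmetric_meas \<mu> \<longleftrightarrow> (\<forall>g. \<mu> g = \<mu> (- g))"

definition harmonic :: "('a::group_add \<Rightarrow> real) \<Rightarrow> ('a \<Rightarrow> real) \<Rightarrow> bool" where
  "harmonic \<mu> f \<longleftrightarrow> (\<forall>x. f x = (\<Sum>s\<in>supp_meas \<mu>. \<mu> s * f (x + s)))"

definition positive_fun :: "('a \<Rightarrow> real) \<Rightarrow> bool" where
  "positive_fun f \<longleftrightarrow> (\<forall>x. f x > 0)"

definition fun_scale :: "real \<Rightarrow> ('a \<Rightarrow> real) \<Rightarrow> ('a \<Rightarrow> real)" where
  "fun_scale c f = (\<lambda>x. c * f x)"

abbreviation fun_span :: "('a \<Rightarrow> real) set \<Rightarrow> ('a \<Rightarrow> real) set" where
  "fun_span S \<equiv> module.span fun_scale S"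

definition infinite_dimensional_span :: "('a \<Rightarrow> real) set \<Rightarrow> bool" where
  "infinite_dimensional_span S \<longleftrightarrow> \<not> (\<exists>B. finite B \<and> fun_span S \<subseteq> fun_span B)"

lemma module_fun_scale: "module fun_scale"
  by unfold_locales (auto simp: fun_scale_def algebra_simps plus_fun_def)

end

theory Submission
  imports Defs
begin

text \<open>
  Suppose the positive harmonic functions span a finite-dimensional space, and let \<open>F\<close> be the sum
  of a basis of positive harmonic functions. Finitely many evaluation points \<open>Y\<close> control the space:
  \<open>\<bar>h z\<bar> \<le> A (\<Sum>y\<in>Y. \<bar>h y\<bar>) F z\<close>. The space contains the constants and is translation invariant,
  so this applies to \<open>z \<mapsto> f (x + z) - f x\<close> for a non-constant positive harmonic \<open>f\<close>; together
  with Harnack's inequality for \<open>F\<close> it bounds the increments \<open>f (x + y) - f x\<close>, \<open>y \<in> Y\<close>, from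
  below wherever \<open>F x\<close> and \<open>F (-x)\<close> are at most \<open>4 F 0\<close>.

  On the other hand \<open>g = 1 / (1 + f)\<close> is subharmonic with values in \<open>[0, 1]\<close>, and its Laplacian
  dominates the squared increments of \<open>f\<close>. So for some \<open>k\<close> the gain \<open>P\<^sup>k g - g\<close> is at least some
  \<open>\<rho> > 0\<close> on that region, where \<open>P\<^sup>k h = markov_iter \<mu> k h\<close>, while
  \<open>\<Sum>\<^sub>n\<^sub><\<^sub>N P\<^sup>n (P\<^sup>k g - g) 0 \<le> k\<close> for every \<open>N\<close>. Since \<open>P\<^sup>n F 0 = F 0\<close> and, by symmetry of \<open>\<mu>\<close>,
  \<open>P\<^sup>n (\<lambda>x. F (-x)) 0 = F 0\<close>, the walk from \<open>0\<close> keeps enough mass in the region that every term of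
  this sum is at least \<open>\<rho> / 2\<close>, a contradiction.
\<close>

section \<open>Iterates of the transition operator\<close>

lemma sum_fun_apply: "(sum f A) x = (\<Sum>a\<in>A. f a x)"
  by (induct A rule: infinite_finite_induct) auto

primrec markov_iter :: "('a::group_add \<Rightarrow> real) \<Rightarrow> nat \<Rightarrow> ('a \<Rightarrow> real) \<Rightarrow> 'a \<Rightarrow> real" where
  "markov_iter \<mu> 0 h x = h x"
| "markov_iter \<mu> (Suc k) h x = (\<Sum>s\<in>supp_meas \<mu>. \<mu> s * markov_iter \<mu> k h (x + s))"

text \<open>The walk multiplying by the steps on the left. It is only needed to reverse paths, which
  together with the symmetry of \<open>\<mu>\<close> gives \<open>markov_iter_reflect\<close>.\<close>
primrec markov_iter_left :: "('a::group_add \<Rightarrow> real) \<Rightarrow> nat \<Rightarrow> ('a \<Rightarrow> real) \<Rightarrow> 'a \<Rightarrow> real" where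
  "markov_iter_left \<mu> 0 h x = h x"
| "markov_iter_left \<mu> (Suc k) h x = (\<Sum>s\<in>supp_meas \<mu>. \<mu> s * markov_iter_left \<mu> k h (s + x))"

lemma markov_iter_left_sum:
  "markov_iter_left \<mu> k (\<lambda>z. \<Sum>i\<in>I. f i z) x = (\<Sum>i\<in>I. markov_iter_left \<mu> k (f i) x)"
proof (induction k arbitrary: x)
  case (Suc k)
  then show ?case by (simp add: sum_distrib_left) (rule sum.swap)
qed simp

lemma markov_iter_add: "markov_iter \<mu> k (\<lambda>z. f z + g z) x = markov_iter \<mu> k f x + markov_iter \<mu> k g x"
  by (induction k arbitrary: x) (simp_all add: sum.distrib distrib_left)

lemma markov_iter_diff: "markov_iter \<mu> k (\<lambda>z. f z - g z) x = markov_iter \<mu> k f x - markov_iter \<mu> k g x"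
  by (induction k arbitrary: x) (simp_all add: sum_subtractf right_diff_distrib)

lemma markov_iter_scale: "markov_iter \<mu> k (\<lambda>z. c * f z) x = c * markov_iter \<mu> k f x"
  by (induction k arbitrary: x) (simp_all add: sum_distrib_left algebra_simps)

lemma markov_iter_left_scale: "markov_iter_left \<mu> k (\<lambda>z. c * f z) x = c * markov_iter_left \<mu> k f x"
  by (induction k arbitrary: x) (simp_all add: sum_distrib_left algebra_simps)

lemma markov_iter_Suc_right:
  "markov_iter \<mu> (Suc k) h x = markov_iter \<mu> k (\<lambda>z. \<Sum>s\<in>supp_meas \<mu>. \<mu> s * h (z + s)) x"
  by (induction k arbitrary: x) simp_all

lemma markov_iter_left_Suc_right:
  "markov_iter_left \<mu> (Suc k) h x = markov_iter_left \<mu> k (\<lambda>z. \<Sum>s\<in>supp_meas \<mu>. \<mu> s * h (s + z)) x"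
  by (induction k arbitrary: x) simp_all

lemma markov_iter_iter: "markov_iter \<mu> n (markov_iter \<mu> k g) x = markov_iter \<mu> (n + k) g x"
  by (induction n arbitrary: x) simp_all

lemma markov_iter_eq_left:
  "markov_iter \<mu> k (\<lambda>z. h (z + b)) a = markov_iter_left \<mu> k (\<lambda>z. h (a + z)) b"
proof (induction k arbitrary: h a b)
  case 0
  then show ?case by simp
next
  case (Suc k)
  have "markov_iter \<mu> (Suc k) (\<lambda>z. h (z + b)) a
      = (\<Sum>s\<in>supp_meas \<mu>. markov_iter_left \<mu> k (\<lambda>z. \<mu> s * h (a + (s + z))) b)"
    using Suc by (simp add: markov_iter_left_scale add.assoc)
  also have "\<dots> = markov_iter_left \<mu> (Suc k) (\<lambda>z. h (a + z)) b"
    by (simp only: markov_iter_left_Suc_right markov_iter_left_sum)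
  finally show ?case .
qed

definition laplacian :: "('a::group_add \<Rightarrow> real) \<Rightarrow> ('a \<Rightarrow> real) \<Rightarrow> 'a \<Rightarrow> real" where
  "laplacian \<mu> g z = (\<Sum>s\<in>supp_meas \<mu>. \<mu> s * g (z + s)) - g z"

lemma markov_iter_Suc_laplacian:
  "markov_iter \<mu> (Suc k) g x = markov_iter \<mu> k g x + markov_iter \<mu> k (laplacian \<mu> g) x"
proof -
  have "markov_iter \<mu> (Suc k) g x = markov_iter \<mu> k (\<lambda>z. g z + laplacian \<mu> g z) x"
    unfolding markov_iter_Suc_right laplacian_def by simp
  then show ?thesis by (simp only: markov_iter_add)
qed

lemma harmonic_translate:
  assumes "harmonic \<mu> f"
  shows "harmonic \<mu> (\<lambda>z. f (x + z))"
  unfolding harmonic_def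
proof
  fix z
  show "f (x + z) = (\<Sum>s\<in>supp_meas \<mu>. \<mu> s * f (x + (z + s)))"
    using assms[unfolded harmonic_def, rule_format, of "x + z"] by (simp only: add.assoc)
qed

lemma harmonic_sum:
  assumes "\<And>t. t \<in> T \<Longrightarrow> harmonic \<mu> t"
  shows "harmonic \<mu> (\<lambda>z. \<Sum>t\<in>T. t z)"
  unfolding harmonic_def
proof
  fix x
  have "(\<Sum>t\<in>T. t x) = (\<Sum>t\<in>T. \<Sum>s\<in>supp_meas \<mu>. \<mu> s * t (x + s))"
    using assms by (intro sum.cong) (auto simp: harmonic_def)
  then show "(\<Sum>t\<in>T. t x) = (\<Sum>s\<in>supp_meas \<mu>. \<mu> s * (\<Sum>t\<in>T. t (x + s)))"
    by (simp add: sum_distrib_left) (rule sum.swap)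
qed

section \<open>Symmetric random walks\<close>

locale sym_random_walk =
  fixes \<mu> :: "'a::group_add \<Rightarrow> real"
  assumes prob: "prob_measure_on_group \<mu>" and symmetric: "symmetric_meas \<mu>"
begin

abbreviation "S \<equiv> supp_meas \<mu>"

lemma finite_supp: "finite S"
  using prob by (simp add: prob_measure_on_group_def)

lemma mu_nonneg: "0 \<le> \<mu> s"
  using prob by (simp add: prob_measure_on_group_def)

lemma mu_pos: "s \<in> S \<Longrightarrow> 0 < \<mu> s"
  using mu_nonneg[of s] by (simp add: supp_meas_def)

lemma sum_mu: "(\<Sum>s\<in>S. \<mu> s) = 1"
  using prob by (simp add: prob_measure_on_group_def)

lemma mu_le_one: "\<mu> s \<le> 1"
proof (cases "s \<in> S")
  case True
  then have "\<mu> s \<le> (\<Sum>s\<in>S. \<mu> s)"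
    by (intro member_le_sum) (auto simp: mu_nonneg finite_supp)
  then show ?thesis by (simp add: sum_mu)
qed (simp add: supp_meas_def)

lemma mu_uminus: "\<mu> (- s) = \<mu> s"
  using symmetric by (metis symmetric_meas_def)

lemma sum_supp_reflect: "(\<Sum>s\<in>S. f (- s)) = (\<Sum>s\<in>S. f s)"
  by (rule sum.reindex_bij_witness[of _ uminus uminus]) (auto simp: supp_meas_def mu_uminus)

lemma harmonic_const: "harmonic \<mu> (\<lambda>_. c)"
  by (simp add: harmonic_def flip: sum_distrib_right) (simp add: sum_mu)

lemma harmonic_term_le:
  assumes "harmonic \<mu> t" "positive_fun t" "s \<in> S"
  shows "\<mu> s * t (x + s) \<le> t x"
proof -
  have "\<mu> s * t (x + s) \<le> (\<Sum>s\<in>S. \<mu> s * t (x + s))"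
    using assms(2,3) by (intro member_le_sum)
      (auto simp: finite_supp mu_nonneg positive_fun_def less_imp_le)
  also have "\<dots> = t x"
    using assms(1) unfolding harmonic_def by metis
  finally show ?thesis .
qed

lemma markov_iter_const: "markov_iter \<mu> k (\<lambda>_. c) x = c"
  by (induction k arbitrary: x) (simp_all flip: sum_distrib_right add: sum_mu)

lemma markov_iter_mono: "(\<And>z. f z \<le> g z) \<Longrightarrow> markov_iter \<mu> k f x \<le> markov_iter \<mu> k g x"
proof (induction k arbitrary: x)
  case (Suc k)
  then show ?case
    by (simp, intro sum_mono mult_left_mono) (auto simp: mu_nonneg)
qed simp

lemma markov_iter_nonneg: "(\<And>z. 0 \<le> f z) \<Longrightarrow> 0 \<le> markov_iter \<mu> k f x"
  using markov_iter_mono[of "\<lambda>_. 0" f k x] by (simp add: markov_iter_const)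

lemma markov_iter_harmonic:
  assumes "harmonic \<mu> h"
  shows "markov_iter \<mu> k h x = h x"
proof (induction k arbitrary: x)
  case (Suc k)
  have "h x = (\<Sum>s\<in>S. \<mu> s * h (x + s))"
    using assms unfolding harmonic_def by blast
  then show ?case
    using Suc by simp
qed simp

lemma markov_iter_reflect_left: "markov_iter \<mu> k (\<lambda>z. h (- z)) x = markov_iter_left \<mu> k h (- x)"
proof (induction k arbitrary: x)
  case (Suc k)
  have "markov_iter \<mu> (Suc k) (\<lambda>z. h (- z)) x = (\<Sum>s\<in>S. \<mu> (- s) * markov_iter_left \<mu> k h (- s + - x))"
    using Suc by (simp add: minus_add mu_uminus)
  also have "\<dots> = markov_iter_left \<mu> (Suc k) h (- x)"
    using sum_supp_reflect[where f = "\<lambda>s. \<mu> s * markov_iter_left \<mu> k h (s + - x)"] by simp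
  finally show ?case .
qed simp

lemma markov_iter_reflect: "markov_iter \<mu> k (\<lambda>z. h (- z)) 0 = markov_iter \<mu> k h 0"
  using markov_iter_reflect_left[of k h 0] markov_iter_eq_left[of \<mu> k h 0 0] by simp

lemma harnack_sgrp_gen:
  assumes "y \<in> sgrp_gen S"
  shows "\<exists>k c. 0 < c \<and> (\<forall>f x. (\<forall>z. 0 \<le> f z) \<longrightarrow> c * f (x + y) \<le> markov_iter \<mu> k f x)"
  using assms
proof induction
  case (base s)
  have "\<mu> s * f (x + s) \<le> markov_iter \<mu> 1 f x" if "\<forall>z. 0 \<le> f z" for f x
    using that base by (simp, intro member_le_sum) (auto simp: mu_nonneg finite_supp)
  then show ?case
    using mu_pos[OF base] by blast
next
  case (step y s)
  then obtain k c where c: "0 < c"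
    and harnack: "\<And>f x. \<forall>z. 0 \<le> f z \<Longrightarrow> c * f (x + y) \<le> markov_iter \<mu> k f x"
    by blast
  have "c * \<mu> s * f (x + (y + s)) \<le> markov_iter \<mu> (Suc k) f x" if f: "\<forall>z. 0 \<le> f z" for f x
  proof -
    have "\<mu> s * f (x + y + s) \<le> (\<Sum>s\<in>S. \<mu> s * f (x + y + s))"
      using f step.hyps(2) by (intro member_le_sum) (auto simp: mu_nonneg finite_supp)
    then have "c * (\<mu> s * f (x + y + s)) \<le> c * (\<Sum>s\<in>S. \<mu> s * f (x + y + s))"
      using c by simp
    also have "\<dots> \<le> markov_iter \<mu> (Suc k) f x"
      unfolding markov_iter_Suc_right using f
      by (intro harnack) (auto intro!: sum_nonneg simp: mu_nonneg)
    finally show ?thesis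
      by (simp add: add.assoc mult.assoc)
  qed
  then show ?case
    using c mu_pos[OF step.hyps(2)] by (metis mult_pos_pos)
qed

end

section \<open>The subharmonic function \<open>1 / (1 + t)\<close>\<close>

lemma inverse_diff_expand:
  fixes A B :: real
  assumes "A \<noteq> 0" "B \<noteq> 0"
  shows "1 / B - 1 / A = (B - A)^2 / (A^2 * B) - (B - A) / A^2"
proof -
  have "(B - A)^2 / (A^2 * B) - (B - A) / A^2 = ((B - A)^2 - (B - A) * B) / (A^2 * B)"
    using assms by (simp add: diff_divide_distrib power2_eq_square)
  also have "(B - A)^2 - (B - A) * B = A * (A - B)"
    by (simp add: power2_eq_square algebra_simps)
  also have "A * (A - B) / (A^2 * B) = 1 / B - 1 / A"
    using assms by (simp add: power2_eq_square field_simps)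
  finally show ?thesis ..
qed

definition inv_one_plus :: "('a \<Rightarrow> real) \<Rightarrow> 'a \<Rightarrow> real" where
  "inv_one_plus t z = 1 / (1 + t z)"

lemma inv_one_plus_bounds:
  assumes "positive_fun t"
  shows "0 \<le> inv_one_plus t z" "inv_one_plus t z \<le> 1"
  using assms[unfolded positive_fun_def, rule_format, of z]
  by (simp_all add: inv_one_plus_def)

context sym_random_walk
begin

lemma laplacian_inv_one_plus:
  assumes "harmonic \<mu> t" "positive_fun t"
  shows "laplacian \<mu> (inv_one_plus t) x
    = (\<Sum>s\<in>S. \<mu> s * ((t (x + s) - t x)^2 / ((1 + t x)^2 * (1 + t (x + s)))))"
proof -
  have pos: "0 < 1 + t z" for z
    using assms(2) by (simp add: positive_fun_def add_pos_pos)
  have expand: "1 / (1 + t (x + s)) - 1 / (1 + t x)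
      = (t (x + s) - t x)^2 / ((1 + t x)^2 * (1 + t (x + s))) - (t (x + s) - t x) / (1 + t x)^2" for s
    using inverse_diff_expand[of "1 + t x" "1 + t (x + s)"] pos[of x] pos[of "x + s"] by simp
  have mean: "(\<Sum>s\<in>S. \<mu> s * (t (x + s) - t x)) = 0"
  proof -
    have "t x = (\<Sum>s\<in>S. \<mu> s * t (x + s))"
      using assms(1) unfolding harmonic_def by blast
    then show ?thesis
      by (simp add: right_diff_distrib sum_subtractf sum_mu flip: sum_distrib_right)
  qed
  have "laplacian \<mu> (inv_one_plus t) x = (\<Sum>s\<in>S. \<mu> s * (1 / (1 + t (x + s)) - 1 / (1 + t x)))"
    by (simp add: laplacian_def inv_one_plus_def right_diff_distrib sum_subtractf sum_mu
        flip: sum_divide_distrib)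
  also have "\<dots> = (\<Sum>s\<in>S. \<mu> s * ((t (x + s) - t x)^2 / ((1 + t x)^2 * (1 + t (x + s)))))
      - (\<Sum>s\<in>S. \<mu> s * (t (x + s) - t x) / (1 + t x)^2)"
    by (simp only: expand right_diff_distrib sum_subtractf times_divide_eq_right)
  also have "(\<Sum>s\<in>S. \<mu> s * (t (x + s) - t x) / (1 + t x)^2) = 0"
    using mean by (simp flip: sum_divide_distrib)
  finally show ?thesis
    by simp
qed

lemma laplacian_inv_one_plus_nonneg:
  assumes "harmonic \<mu> t" "positive_fun t"
  shows "0 \<le> laplacian \<mu> (inv_one_plus t) x"
  unfolding laplacian_inv_one_plus[OF assms]
  using assms(2) by (intro sum_nonneg) (auto simp: positive_fun_def mu_nonneg add_pos_pos less_imp_le)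

lemma sq_increment_le_laplacian:
  assumes "harmonic \<mu> t" "positive_fun t" "s \<in> S"
  shows "\<mu> s^2 * (t (x + s) - t x)^2 \<le> (1 + t x)^3 * laplacian \<mu> (inv_one_plus t) x"
proof -
  define a b d where "a = 1 + t x" and "b = 1 + t (x + s)" and "d = t (x + s) - t x"
  define q where "q = \<mu> s * (d^2 / (a^2 * b))"
  have ab: "0 < a" "0 < b"
    using assms(2) by (auto simp: a_def b_def positive_fun_def add_pos_pos)
  have "\<mu> s * b \<le> a"
    using harmonic_term_le[OF assms, of x] mu_le_one[of s] by (simp add: a_def b_def distrib_left)
  then have "a^2 * (\<mu> s * b) \<le> a^3"
    using ab by (simp add: power3_eq_cube power2_eq_square)
  moreover have "q \<le> laplacian \<mu> (inv_one_plus t) x"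
    unfolding laplacian_inv_one_plus[OF assms(1,2)] q_def a_def b_def d_def
    using assms(2,3) by (intro member_le_sum)
      (auto simp: finite_supp positive_fun_def mu_nonneg add_pos_pos less_imp_le)
  ultimately have "q * (a^2 * (\<mu> s * b)) \<le> laplacian \<mu> (inv_one_plus t) x * a^3"
    using ab mu_nonneg[of s] laplacian_inv_one_plus_nonneg[OF assms(1,2)]
    by (intro mult_mono) (auto simp: q_def)
  moreover have "q * (a^2 * (\<mu> s * b)) = \<mu> s^2 * d^2"
    using ab by (simp add: q_def field_simps power2_eq_square)
  ultimately show ?thesis
    by (simp add: a_def d_def mult.commute)
qed

lemma markov_iter_inv_one_plus_mono:
  assumes "harmonic \<mu> t" "positive_fun t" "m \<le> n"
  shows "markov_iter \<mu> m (inv_one_plus t) x \<le> markov_iter \<mu> n (inv_one_plus t) x"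
  using assms(3)
proof (induction n rule: dec_induct)
  case (step n)
  have "0 \<le> markov_iter \<mu> n (laplacian \<mu> (inv_one_plus t)) x"
    by (intro markov_iter_nonneg laplacian_inv_one_plus_nonneg assms(1,2))
  then show ?case
    using step.IH by (simp only: markov_iter_Suc_laplacian)
qed simp

lemma gain_nonneg:
  assumes "harmonic \<mu> t" "positive_fun t"
  shows "0 \<le> markov_iter \<mu> k (inv_one_plus t) x - inv_one_plus t x"
  using markov_iter_inv_one_plus_mono[OF assms, of 0 k x] by simp

definition gain_controls_increment :: "('a \<Rightarrow> real) \<Rightarrow> 'a \<Rightarrow> nat \<Rightarrow> real \<Rightarrow> bool" where
  "gain_controls_increment t y k C \<longleftrightarrow> (\<forall>x. (t (x + y) - t x)^2
     \<le> C * (1 + t x)^3 * (markov_iter \<mu> k (inv_one_plus t) x - inv_one_plus t x))"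

lemma gain_controls_increment_mono:
  assumes "harmonic \<mu> t" "positive_fun t" "gain_controls_increment t y k C"
    and "0 \<le> C" "k \<le> k'" "C \<le> C'"
  shows "gain_controls_increment t y k' C'"
  unfolding gain_controls_increment_def
proof
  fix x
  have "0 \<le> (1 + t x)^3"
    using assms(2) by (simp add: positive_fun_def less_imp_le add_pos_pos)
  moreover have "markov_iter \<mu> k (inv_one_plus t) x \<le> markov_iter \<mu> k' (inv_one_plus t) x"
    using markov_iter_inv_one_plus_mono[OF assms(1,2,5)] .
  ultimately have "C * (1 + t x)^3 * (markov_iter \<mu> k (inv_one_plus t) x - inv_one_plus t x)
      \<le> C' * (1 + t x)^3 * (markov_iter \<mu> k' (inv_one_plus t) x - inv_one_plus t x)"
    using assms(4,6) gain_nonneg[OF assms(1,2), of k x]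
    by (intro mult_mono) (auto intro: mult_right_mono)
  then show "(t (x + y) - t x)^2
      \<le> C' * (1 + t x)^3 * (markov_iter \<mu> k' (inv_one_plus t) x - inv_one_plus t x)"
    using assms(3) unfolding gain_controls_increment_def by (meson order_trans)
qed

lemma gain_controls_increment_supp:
  assumes "harmonic \<mu> t" "positive_fun t" "s \<in> S"
  shows "gain_controls_increment t s 1 (1 / \<mu> s^2)"
  unfolding gain_controls_increment_def
proof
  fix x
  have "markov_iter \<mu> 1 (inv_one_plus t) x - inv_one_plus t x = laplacian \<mu> (inv_one_plus t) x"
    using markov_iter_Suc_laplacian[of \<mu> 0 "inv_one_plus t" x] by simp
  then show "(t (x + s) - t x)^2
      \<le> 1 / \<mu> s^2 * (1 + t x)^3 * (markov_iter \<mu> 1 (inv_one_plus t) x - inv_one_plus t x)"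
    using sq_increment_le_laplacian[OF assms, of x] mu_pos[OF assms(3)]
    by (simp add: field_simps)
qed

lemma sq_increment_harnack:
  assumes t: "harmonic \<mu> t" "positive_fun t" and "s \<in> S" and "0 < c"
    and harnack: "\<forall>f x. (\<forall>z. 0 \<le> f z) \<longrightarrow> c * f (x + y) \<le> markov_iter \<mu> k f x"
  shows "\<mu> s^2 * c^4 * (t (x + y + s) - t (x + y))^2
    \<le> (1 + t x)^3 * (markov_iter \<mu> (Suc k) (inv_one_plus t) x - markov_iter \<mu> k (inv_one_plus t) x)"
proof -
  define a l where "a = 1 + t (x + y)" and "l = laplacian \<mu> (inv_one_plus t) (x + y)"
  have "c \<le> 1"
    using harnack[rule_format, of "\<lambda>_. 1" 0] by (simp add: markov_iter_const)
  moreover have "c * t (x + y) \<le> t x"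
    using harnack[rule_format, of t x] t by (simp add: markov_iter_harmonic positive_fun_def less_imp_le)
  ultimately have ca: "c * a \<le> 1 + t x"
    by (simp add: a_def distrib_left)
  have cl: "c * l \<le> markov_iter \<mu> (Suc k) (inv_one_plus t) x - markov_iter \<mu> k (inv_one_plus t) x"
    using harnack[rule_format, of "laplacian \<mu> (inv_one_plus t)" x] laplacian_inv_one_plus_nonneg[OF t]
    unfolding l_def markov_iter_Suc_laplacian by simp
  have nonneg: "0 \<le> c * a" "0 \<le> c * l"
    using \<open>0 < c\<close> t laplacian_inv_one_plus_nonneg[OF t]
    by (auto simp: a_def l_def positive_fun_def add_pos_pos less_imp_le)
  have "\<mu> s^2 * c^4 * (t (x + y + s) - t (x + y))^2 \<le> c^4 * (a^3 * l)"
    using sq_increment_le_laplacian[OF t \<open>s \<in> S\<close>, of "x + y"] \<open>0 < c\<close>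
    by (simp add: a_def l_def mult_ac)
  also have "\<dots> = (c * a)^3 * (c * l)"
    by (simp add: power3_eq_cube power4_eq_xxxx)
  also have "\<dots> \<le> (1 + t x)^3 * (markov_iter \<mu> (Suc k) (inv_one_plus t) x - markov_iter \<mu> k (inv_one_plus t) x)"
    using ca cl nonneg by (intro mult_mono power_mono) auto
  finally show ?thesis .
qed

text \<open>The increment along \<open>y + s\<close> splits into the increment along \<open>y\<close> and one step \<open>s\<close> taken at
  \<open>x + y\<close>; Harnack's inequality for the path to \<open>y\<close> moves the bound for the latter back to \<open>x\<close>.\<close>
lemma gain_controls_increment_step:
  assumes t: "harmonic \<mu> t" "positive_fun t"
    and IH: "gain_controls_increment t y k C" "0 \<le> C"
    and "s \<in> S" and "0 < c"
    and harnack: "\<forall>f x. (\<forall>z. 0 \<le> f z) \<longrightarrow> c * f (x + y) \<le> markov_iter \<mu> k' f x"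
  shows "gain_controls_increment t (y + s) (max k (Suc k')) (2 * C + 2 / (\<mu> s^2 * c^4))"
  unfolding gain_controls_increment_def
proof
  fix x
  define K where "K = max k (Suc k')"
  define G where "G = markov_iter \<mu> K (inv_one_plus t) x - inv_one_plus t x"
  define T3 where "T3 = (1 + t x)^3"
  have m: "0 < \<mu> s^2 * c^4"
    using mu_pos[OF \<open>s \<in> S\<close>] \<open>0 < c\<close> by simp
  have "0 \<le> T3"
    using t(2) by (simp add: T3_def positive_fun_def add_pos_pos less_imp_le)
  moreover have "markov_iter \<mu> (Suc k') (inv_one_plus t) x - markov_iter \<mu> k' (inv_one_plus t) x \<le> G"
    using markov_iter_inv_one_plus_mono[OF t, of "Suc k'" K x]
      markov_iter_inv_one_plus_mono[OF t, of 0 k' x]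
    by (simp add: G_def K_def)
  ultimately have "\<mu> s^2 * c^4 * (t (x + y + s) - t (x + y))^2 \<le> T3 * G"
    using sq_increment_harnack[OF t \<open>s \<in> S\<close> \<open>0 < c\<close> harnack, of x]
    unfolding T3_def by (meson mult_left_mono order_trans)
  then have u: "(t (x + y + s) - t (x + y))^2 \<le> T3 * G / (\<mu> s^2 * c^4)"
    using m by (simp add: pos_le_divide_eq mult.commute)
  have v: "(t (x + y) - t x)^2 \<le> C * T3 * G"
    using gain_controls_increment_mono[OF t IH, of K C] unfolding gain_controls_increment_def
    by (simp add: G_def K_def T3_def)
  have "(t (x + (y + s)) - t x)^2 \<le> 2 * (t (x + y + s) - t (x + y))^2 + 2 * (t (x + y) - t x)^2"
    using sum_squared_le_sum_of_squares[of "\<lambda>b. if b then t (x + y + s) - t (x + y) else t (x + y) - t x" UNIV]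
    by (simp add: UNIV_bool add.assoc)
  also have "\<dots> \<le> 2 * (T3 * G / (\<mu> s^2 * c^4)) + 2 * (C * T3 * G)"
    using u v by linarith
  also have "\<dots> = (2 * C + 2 / (\<mu> s^2 * c^4)) * T3 * G"
    using m by (simp add: field_simps)
  finally show "(t (x + (y + s)) - t x)^2 \<le> (2 * C + 2 / (\<mu> s^2 * c^4)) * (1 + t x)^3
      * (markov_iter \<mu> (max k (Suc k')) (inv_one_plus t) x - inv_one_plus t x)"
    by (simp add: G_def K_def T3_def)
qed

lemma gain_controls_increment_sgrp_gen:
  assumes t: "harmonic \<mu> t" "positive_fun t" and "y \<in> sgrp_gen S"
  shows "\<exists>k C. 0 \<le> C \<and> gain_controls_increment t y k C"
  using \<open>y \<in> sgrp_gen S\<close>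
proof induction
  case (base s)
  have "0 \<le> 1 / \<mu> s^2"
    by simp
  then show ?case
    using gain_controls_increment_supp[OF t base] by blast
next
  case (step y s)
  then obtain k C where "0 \<le> C" "gain_controls_increment t y k C"
    by blast
  moreover obtain k' c where "0 < c"
    "\<forall>f x. (\<forall>z. 0 \<le> f z) \<longrightarrow> c * f (x + y) \<le> markov_iter \<mu> k' f x"
    using harnack_sgrp_gen[OF step.hyps(1)] by blast
  moreover have "0 \<le> 2 * C + 2 / (\<mu> s^2 * c^4)"
    using \<open>0 \<le> C\<close> by simp
  ultimately show ?case
    using gain_controls_increment_step[OF t _ _ step.hyps(2)] by blast
qed

lemma gain_controls_increment_finite:
  assumes t: "harmonic \<mu> t" "positive_fun t" and "finite Y" "Y \<subseteq> sgrp_gen S"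
  shows "\<exists>k C. 0 \<le> C \<and> (\<forall>y\<in>Y. gain_controls_increment t y k C)"
  using assms(3,4)
proof (induction Y rule: finite_induct)
  case empty
  then show ?case by auto
next
  case (insert y Y)
  then obtain k C where C: "0 \<le> C" "\<forall>y\<in>Y. gain_controls_increment t y k C"
    by blast
  obtain k' C' where C': "0 \<le> C'" "gain_controls_increment t y k' C'"
    using gain_controls_increment_sgrp_gen[OF t] insert.prems by blast
  have "\<forall>y\<in>insert y Y. gain_controls_increment t y (max k k') (max C C')"
    using C C' gain_controls_increment_mono[OF t] by (metis insert_iff max.cobounded1 max.cobounded2)
  then show ?case
    using C by (metis max.coboundedI1)
qed

lemma sum_increments_sq_le:
  assumes f: "harmonic \<mu> f" "positive_fun f" and "finite Y"
    and control: "\<forall>y\<in>Y. gain_controls_increment f y k C" and "0 \<le> C" and "f x \<le> b"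
  shows "(\<Sum>y\<in>Y. \<bar>f (x + y) - f x\<bar>)^2
    \<le> real (card Y)^2 * (C * (1 + b)^3) * (markov_iter \<mu> k (inv_one_plus f) x - inv_one_plus f x)"
proof -
  define G where "G = markov_iter \<mu> k (inv_one_plus f) x - inv_one_plus f x"
  have "0 < 1 + f x"
    using f(2) by (simp add: positive_fun_def add_pos_pos)
  then have "C * (1 + f x)^3 * G \<le> C * (1 + b)^3 * G"
    using \<open>0 \<le> C\<close> \<open>f x \<le> b\<close> gain_nonneg[OF f, of k x]
    by (intro mult_right_mono mult_left_mono power_mono) (auto simp: G_def)
  then have each: "(f (x + y) - f x)^2 \<le> C * (1 + b)^3 * G" if "y \<in> Y" for y
    using control that unfolding gain_controls_increment_def G_def by (meson order_trans)
  have "(\<Sum>y\<in>Y. \<bar>f (x + y) - f x\<bar>)^2 \<le> (\<Sum>y\<in>Y. (f (x + y) - f x)^2) * real (card Y)"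
    using sum_squared_le_sum_of_squares[of "\<lambda>y. \<bar>f (x + y) - f x\<bar>" Y] by simp
  also have "\<dots> \<le> (real (card Y) * (C * (1 + b)^3 * G)) * real (card Y)"
    using sum_mono[OF each] by (intro mult_right_mono) auto
  finally show ?thesis
    by (simp add: G_def power2_eq_square mult_ac)
qed

end

section \<open>Bounded gains along the walk\<close>

lemma sum_shift_diff_le:
  fixes a :: "nat \<Rightarrow> real"
  assumes "\<And>n. 0 \<le> a n" "\<And>n. a n \<le> 1"
  shows "(\<Sum>n<N. a (n + k) - a n) \<le> real k"
proof (induction k)
  case (Suc k)
  have "(\<Sum>n<N. a (n + Suc k) - a n)
      = (\<Sum>n<N. a (Suc n + k) - a (n + k)) + (\<Sum>n<N. a (n + k) - a n)"
    by (simp add: sum.distrib[symmetric])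
  also have "(\<Sum>n<N. a (Suc n + k) - a (n + k)) = a (N + k) - a k"
    using sum_lessThan_telescope[where f = "\<lambda>n. a (n + k)"] by simp
  finally show ?case
    using Suc assms[of "N + k"] assms[of k] by simp
qed simp

context sym_random_walk
begin

lemma sum_markov_iter_gain_le:
  assumes "\<And>z. 0 \<le> g z" "\<And>z. g z \<le> 1"
  shows "(\<Sum>n<N. markov_iter \<mu> n (\<lambda>x. markov_iter \<mu> k g x - g x) x) \<le> real k"
proof -
  have "markov_iter \<mu> n (\<lambda>x. markov_iter \<mu> k g x - g x) x
      = markov_iter \<mu> (n + k) g x - markov_iter \<mu> n g x" for n
    by (simp add: markov_iter_diff markov_iter_iter)
  moreover have "0 \<le> markov_iter \<mu> n g x" "markov_iter \<mu> n g x \<le> 1" for n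
    using assms markov_iter_nonneg[of g n x] markov_iter_mono[of g "\<lambda>_. 1" n x]
    by (auto simp: markov_iter_const)
  ultimately show ?thesis
    using sum_shift_diff_le[where a = "\<lambda>n. markov_iter \<mu> n g x" and N = N and k = k] by simp
qed

lemma markov_iter_reflect_harmonic: "harmonic \<mu> F \<Longrightarrow> markov_iter \<mu> n (\<lambda>z. F (- z)) 0 = F 0"
  by (simp add: markov_iter_reflect markov_iter_harmonic)

text \<open>Where \<open>F x\<close> and \<open>F (-x)\<close> are small the gain is at least \<open>\<rho>\<close>; elsewhere the linear
  minorant below is negative. Its average along the walk from \<open>0\<close> is \<open>\<rho>/2\<close> at every time.\<close>
lemma markov_iter_gain_ge_half:
  assumes F: "harmonic \<mu> F" "positive_fun F" and t: "harmonic \<mu> t" "positive_fun t" and "0 < \<rho>"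
    and gain: "\<And>x. F x \<le> 4 * F 0 \<Longrightarrow> F (- x) \<le> 4 * F 0
      \<Longrightarrow> \<rho> \<le> markov_iter \<mu> k (inv_one_plus t) x - inv_one_plus t x"
  shows "\<rho> / 2 \<le> markov_iter \<mu> n (\<lambda>x. markov_iter \<mu> k (inv_one_plus t) x - inv_one_plus t x) 0"
proof -
  define a where "a = \<rho> / (4 * F 0)"
  have F_pos: "\<And>x. 0 < F x"
    using F(2) by (auto simp: positive_fun_def)
  have a: "0 < a" "a * (4 * F 0) = \<rho>"
    using F_pos[of 0] \<open>0 < \<rho>\<close> by (simp_all add: a_def)
  have nonneg: "0 \<le> a * F x" "0 \<le> a * F (- x)" for x
    using a F_pos by (simp_all add: less_imp_le)
  have minorant: "\<rho> - a * F x - a * F (- x) \<le> markov_iter \<mu> k (inv_one_plus t) x - inv_one_plus t x"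
    for x
  proof (cases "F x \<le> 4 * F 0 \<and> F (- x) \<le> 4 * F 0")
    case True
    then show ?thesis
      using gain[of x] nonneg[of x] by linarith
  next
    case False
    then have "\<rho> < a * F x \<or> \<rho> < a * F (- x)"
      using a by (metis mult_strict_left_mono not_le)
    then show ?thesis
      using nonneg[of x] gain_nonneg[OF t, of k x] by linarith
  qed
  have "markov_iter \<mu> n (\<lambda>x. \<rho> - a * F x - a * F (- x)) 0 = \<rho> - 2 * a * F 0"
    using markov_iter_reflect_harmonic[OF F(1)]
    by (simp add: markov_iter_diff markov_iter_const markov_iter_scale markov_iter_harmonic[OF F(1)])
  also have "\<dots> = \<rho> / 2"
    using a(2) by simp
  finally have "markov_iter \<mu> n (\<lambda>x. \<rho> - a * F x - a * F (- x)) 0 = \<rho> / 2" .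
  then show ?thesis
    using markov_iter_mono[of "\<lambda>x. \<rho> - a * F x - a * F (- x)", OF minorant, of n 0] by linarith
qed

lemma no_uniform_gain:
  assumes F: "harmonic \<mu> F" "positive_fun F" and t: "harmonic \<mu> t" "positive_fun t" and "0 < \<rho>"
    and gain: "\<And>x. F x \<le> 4 * F 0 \<Longrightarrow> F (- x) \<le> 4 * F 0
      \<Longrightarrow> \<rho> \<le> markov_iter \<mu> k (inv_one_plus t) x - inv_one_plus t x"
  shows False
proof -
  define R where "R = (\<lambda>x. markov_iter \<mu> k (inv_one_plus t) x - inv_one_plus t x)"
  define N where "N = nat \<lceil>2 * real k / \<rho>\<rceil> + 1"
  have "real N * (\<rho> / 2) \<le> (\<Sum>n<N. markov_iter \<mu> n R 0)"
    using sum_mono[of "{..<N}" "\<lambda>_. \<rho> / 2" "\<lambda>n. markov_iter \<mu> n R 0"]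
      markov_iter_gain_ge_half[OF assms] by (simp add: R_def)
  also have "\<dots> \<le> real k"
    unfolding R_def by (intro sum_markov_iter_gain_le inv_one_plus_bounds t(2))
  finally have "real N * (\<rho> / 2) \<le> real k" .
  moreover have "2 * real k / \<rho> < real N"
    unfolding N_def by linarith
  then have "real k < real N * (\<rho> / 2)"
    using \<open>0 < \<rho>\<close> by (simp add: pos_divide_less_eq algebra_simps)
  ultimately show False
    by linarith
qed

end

section \<open>Interpolation in finite-dimensional spaces of functions\<close>

interpretation fun_vec: vector_space fun_scale
  using module_fun_scale by (simp add: module_iff_vector_space)

lemma fun_scale_apply: "fun_scale c f x = c * f x"
  by (simp add: fun_scale_def)

definition lagrange_nodes :: "('a \<Rightarrow> real) set \<Rightarrow> 'a set \<Rightarrow> ('a \<Rightarrow> 'a \<Rightarrow> real) \<Rightarrow> bool" where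
  "lagrange_nodes V Y L \<longleftrightarrow> finite Y \<and> (\<forall>y\<in>Y. L y \<in> V)
     \<and> (\<forall>y\<in>Y. \<forall>y'\<in>Y. L y y' = (if y = y' then 1 else 0))
     \<and> (\<forall>h\<in>V. (\<forall>y\<in>Y. h y = 0) \<longrightarrow> h = 0)"

lemma lagrange_nodes_extend:
  assumes nodes: "lagrange_nodes V Y L" and "fun_vec.subspace W" "V \<subseteq> W" "g \<in> W"
    and decomp: "\<And>h. h \<in> W \<Longrightarrow> \<exists>k. h - fun_scale k g \<in> V"
    and g: "\<forall>y\<in>Y. g y = 0" "g y0 \<noteq> 0"
  shows "\<exists>L'. lagrange_nodes W (insert y0 Y) L'"
proof -
  define L0 where "L0 = fun_scale (1 / g y0) g"
  define L' where "L' y = (if y = y0 then L0 else L y - fun_scale (L y y0) L0)" for y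
  have "y0 \<notin> Y"
    using g by auto
  have L0: "L0 \<in> W" "L0 y0 = 1" "\<forall>y\<in>Y. L0 y = 0"
    using \<open>fun_vec.subspace W\<close> \<open>g \<in> W\<close> g by (auto simp: L0_def fun_scale_apply fun_vec.subspace_scale)
  have "\<forall>y\<in>insert y0 Y. L' y \<in> W"
    using nodes L0(1) \<open>fun_vec.subspace W\<close> \<open>V \<subseteq> W\<close>
    by (auto simp: L'_def lagrange_nodes_def intro!: fun_vec.subspace_diff fun_vec.subspace_scale)
  moreover have "\<forall>y\<in>insert y0 Y. \<forall>y'\<in>insert y0 Y. L' y y' = (if y = y' then 1 else 0)"
    using nodes L0(2,3) \<open>y0 \<notin> Y\<close> by (auto simp: L'_def lagrange_nodes_def fun_scale_apply)
  moreover have "h = 0" if "h \<in> W" and h0: "\<forall>y\<in>insert y0 Y. h y = 0" for h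
  proof -
    obtain k where "h - fun_scale k g \<in> V"
      using decomp[OF \<open>h \<in> W\<close>] by blast
    moreover have "\<forall>y\<in>Y. (h - fun_scale k g) y = 0"
      using h0 g by (simp add: fun_scale_apply)
    ultimately have "h = fun_scale k g"
      using nodes unfolding lagrange_nodes_def by auto
    moreover have "k = 0"
      using h0 g calculation by (simp add: fun_scale_apply)
    ultimately show "h = 0"
      by (simp add: fun_eq_iff fun_scale_apply)
  qed
  ultimately show ?thesis
    using nodes by (auto simp: lagrange_nodes_def)
qed

lemma fun_span_insert_shift:
  assumes "p \<in> fun_span T" "h \<in> fun_span (insert f T)"
  shows "\<exists>k. h - fun_scale k (f - p) \<in> fun_span T"
proof -
  obtain k where "h - fun_scale k f \<in> fun_span T"
    using assms(2) fun_vec.span_insert by blast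
  then have "(h - fun_scale k f) + fun_scale k p \<in> fun_span T"
    using assms(1) by (intro fun_vec.span_add fun_vec.span_scale)
  moreover have "(h - fun_scale k f) + fun_scale k p = h - fun_scale k (f - p)"
    by (simp add: fun_eq_iff fun_scale_apply algebra_simps)
  ultimately show ?thesis
    by auto
qed

lemma lagrange_nodes_insert:
  assumes nodes: "lagrange_nodes (fun_span T) Y L"
  shows "\<exists>Y' L'. lagrange_nodes (fun_span (insert f T)) Y' L'"
proof -
  define p where "p = (\<Sum>y\<in>Y. fun_scale (f y) (L y))"
  define g where "g = f - p"
  have p: "p \<in> fun_span T"
    using nodes unfolding p_def lagrange_nodes_def by (auto intro!: fun_vec.span_sum fun_vec.span_scale)
  have "p y' = f y'" if "y' \<in> Y" for y'
  proof -
    have "p y' = (\<Sum>y\<in>Y. f y * L y y')"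
      by (simp add: p_def sum_fun_apply fun_scale_apply)
    also have "\<dots> = (\<Sum>y\<in>Y. if y = y' then f y else 0)"
      using nodes that unfolding lagrange_nodes_def by (intro sum.cong) auto
    finally show ?thesis
      using nodes that by (simp add: lagrange_nodes_def)
  qed
  then have g_Y: "\<forall>y\<in>Y. g y = 0"
    by (simp add: g_def)
  show ?thesis
  proof (cases "g = 0")
    case True
    then have "fun_span (insert f T) = fun_span T"
      using p by (intro fun_vec.span_redundant) (simp add: g_def)
    then show ?thesis
      using nodes by auto
  next
    case False
    then obtain y0 where "g y0 \<noteq> 0"
      by (auto simp: fun_eq_iff)
    moreover have "\<exists>k. h - fun_scale k g \<in> fun_span T" if "h \<in> fun_span (insert f T)" for h
      using fun_span_insert_shift[OF p that] by (simp add: g_def)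
    moreover have "g \<in> fun_span (insert f T)"
      using p unfolding g_def
      by (intro fun_vec.span_diff) (auto intro: fun_vec.span_base fun_vec.span_mono[THEN subsetD])
    ultimately show ?thesis
      using lagrange_nodes_extend[OF nodes fun_vec.subspace_span _ _ _ g_Y]
        fun_vec.span_mono[of T "insert f T"] by blast
  qed
qed

lemma lagrange_nodes_exist: "finite T \<Longrightarrow> \<exists>Y L. lagrange_nodes (fun_span T) Y L"
proof (induction T rule: finite_induct)
  case empty
  show ?case
    by (rule exI[of _ "{}"]) (simp add: lagrange_nodes_def fun_vec.span_empty)
next
  case (insert f T)
  then show ?case
    using lagrange_nodes_insert by blast
qed

lemma lagrange_expansion:
  assumes nodes: "lagrange_nodes (fun_span T) Y L" and "h \<in> fun_span T"
  shows "h z = (\<Sum>y\<in>Y. h y * L y z)"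
proof -
  have fin: "finite Y" and L: "\<And>y. y \<in> Y \<Longrightarrow> L y \<in> fun_span T"
    and dual: "\<And>y y'. y \<in> Y \<Longrightarrow> y' \<in> Y \<Longrightarrow> L y y' = (if y = y' then 1 else 0)"
    and unique: "\<And>r. r \<in> fun_span T \<Longrightarrow> \<forall>y\<in>Y. r y = 0 \<Longrightarrow> r = 0"
    using nodes unfolding lagrange_nodes_def by blast+
  define r where "r = h - (\<Sum>y\<in>Y. fun_scale (h y) (L y))"
  have r_apply: "r x = h x - (\<Sum>y\<in>Y. h y * L y x)" for x
    by (simp add: r_def sum_fun_apply fun_scale_apply)
  have "r \<in> fun_span T"
    using L \<open>h \<in> fun_span T\<close> unfolding r_def
    by (intro fun_vec.span_diff fun_vec.span_sum fun_vec.span_scale) auto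
  moreover have "r y' = 0" if "y' \<in> Y" for y'
  proof -
    have "(\<Sum>y\<in>Y. h y * L y y') = (\<Sum>y\<in>Y. if y = y' then h y else 0)"
      using dual that by (intro sum.cong) auto
    then show ?thesis
      using fin that by (simp add: r_apply)
  qed
  ultimately have "r = 0"
    using unique by blast
  then show ?thesis
    using r_apply[of z] by simp
qed

lemma fun_span_abs_le:
  assumes "finite T" "h \<in> fun_span T"
  shows "\<exists>A. 0 \<le> A \<and> (\<forall>z. \<bar>h z\<bar> \<le> A * (\<Sum>t\<in>T. \<bar>t z\<bar>))"
proof -
  obtain c where c: "h = (\<Sum>t\<in>T. fun_scale (c t) t)"
    using fun_vec.span_finite[OF assms(1)] assms(2) by blast
  have "\<bar>h z\<bar> \<le> (\<Sum>t\<in>T. \<bar>c t\<bar>) * (\<Sum>t\<in>T. \<bar>t z\<bar>)" for z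
  proof -
    have "\<bar>h z\<bar> \<le> (\<Sum>t\<in>T. \<bar>c t\<bar> * \<bar>t z\<bar>)"
      unfolding c sum_fun_apply fun_scale_apply by (rule order_trans[OF sum_abs]) (simp add: abs_mult)
    also have "\<dots> \<le> (\<Sum>t\<in>T. \<bar>c t\<bar> * (\<Sum>t'\<in>T. \<bar>t' z\<bar>))"
      using assms(1) by (intro sum_mono mult_left_mono member_le_sum) auto
    finally show ?thesis
      by (simp add: sum_distrib_right)
  qed
  then show ?thesis
    by (meson sum_nonneg abs_ge_zero)
qed

lemma fun_span_abs_le_uniform:
  assumes "finite T" "finite H" "H \<subseteq> fun_span T"
  shows "\<exists>A. 0 \<le> A \<and> (\<forall>h\<in>H. \<forall>z. \<bar>h z\<bar> \<le> A * (\<Sum>t\<in>T. \<bar>t z\<bar>))"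
proof -
  have "\<forall>h\<in>H. \<exists>A. 0 \<le> A \<and> (\<forall>z. \<bar>h z\<bar> \<le> A * (\<Sum>t\<in>T. \<bar>t z\<bar>))"
    using fun_span_abs_le[OF assms(1)] assms(3) by blast
  then obtain A where A: "\<And>h. h \<in> H \<Longrightarrow> 0 \<le> A h"
    and le: "\<And>h z. h \<in> H \<Longrightarrow> \<bar>h z\<bar> \<le> A h * (\<Sum>t\<in>T. \<bar>t z\<bar>)"
    by metis
  have "\<bar>h z\<bar> \<le> (\<Sum>h\<in>H. A h) * (\<Sum>t\<in>T. \<bar>t z\<bar>)" if "h \<in> H" for h z
  proof -
    have "A h \<le> (\<Sum>h\<in>H. A h)"
      using A assms(2) that by (intro member_le_sum) auto
    then have "A h * (\<Sum>t\<in>T. \<bar>t z\<bar>) \<le> (\<Sum>h\<in>H. A h) * (\<Sum>t\<in>T. \<bar>t z\<bar>)"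
      by (intro mult_right_mono) (simp_all add: sum_nonneg)
    then show ?thesis
      using le[OF that, of z] by linarith
  qed
  moreover have "0 \<le> (\<Sum>h\<in>H. A h)"
    using A by (simp add: sum_nonneg)
  ultimately show ?thesis
    by blast
qed

lemma fun_span_eval_bound:
  assumes "finite T"
  shows "\<exists>Y A. finite Y \<and> 0 \<le> A
    \<and> (\<forall>h\<in>fun_span T. \<forall>z. \<bar>h z\<bar> \<le> A * (\<Sum>y\<in>Y. \<bar>h y\<bar>) * (\<Sum>t\<in>T. \<bar>t z\<bar>))"
proof -
  obtain Y L where nodes: "lagrange_nodes (fun_span T) Y L"
    using lagrange_nodes_exist[OF assms] by blast
  then have L: "finite (L ` Y)" "L ` Y \<subseteq> fun_span T"
    unfolding lagrange_nodes_def by auto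
  obtain A where "0 \<le> A" and "\<forall>h\<in>L ` Y. \<forall>z. \<bar>h z\<bar> \<le> A * (\<Sum>t\<in>T. \<bar>t z\<bar>)"
    using fun_span_abs_le_uniform[OF assms L] by blast
  then have L_le: "\<bar>L y z\<bar> \<le> A * (\<Sum>t\<in>T. \<bar>t z\<bar>)" if "y \<in> Y" for y z
    using that by simp
  have "\<bar>h z\<bar> \<le> A * (\<Sum>y\<in>Y. \<bar>h y\<bar>) * (\<Sum>t\<in>T. \<bar>t z\<bar>)" if "h \<in> fun_span T" for h z
  proof -
    have "\<bar>h z\<bar> \<le> (\<Sum>y\<in>Y. \<bar>h y\<bar> * \<bar>L y z\<bar>)"
      unfolding lagrange_expansion[OF nodes that, of z] by (rule order_trans[OF sum_abs]) (simp add: abs_mult)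
    also have "\<dots> \<le> (\<Sum>y\<in>Y. \<bar>h y\<bar> * (A * (\<Sum>t\<in>T. \<bar>t z\<bar>)))"
      by (intro sum_mono mult_left_mono L_le) auto
    also have "\<dots> = A * (\<Sum>y\<in>Y. \<bar>h y\<bar>) * (\<Sum>t\<in>T. \<bar>t z\<bar>)"
      by (simp add: sum_distrib_left sum_distrib_right mult_ac)
    finally show ?thesis .
  qed
  then show ?thesis
    using nodes \<open>0 \<le> A\<close> unfolding lagrange_nodes_def by blast
qed

section \<open>A finite basis of positive harmonic functions\<close>

locale positive_harmonic_basis = sym_random_walk +
  fixes T :: "('a \<Rightarrow> real) set"
  assumes finite_basis: "finite T"
    and basis_harmonic: "t \<in> T \<Longrightarrow> harmonic \<mu> t"
    and basis_positive: "t \<in> T \<Longrightarrow> positive_fun t"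
    and positive_harmonic_in_span: "harmonic \<mu> f \<Longrightarrow> positive_fun f \<Longrightarrow> f \<in> fun_span T"
    and generating: "generating \<mu>"
begin

definition basis_sum :: "'a \<Rightarrow> real" where
  "basis_sum z = (\<Sum>t\<in>T. t z)"

lemma basis_nonempty: "T \<noteq> {}"
proof
  assume "T = {}"
  moreover have "(\<lambda>_. 1) \<in> fun_span T"
    by (intro positive_harmonic_in_span harmonic_const) (simp add: positive_fun_def)
  ultimately show False
    by (simp add: fun_vec.span_empty fun_eq_iff)
qed

lemma basis_sum_harmonic: "harmonic \<mu> basis_sum"
  using harmonic_sum[OF basis_harmonic] by (simp add: basis_sum_def[abs_def])

lemma basis_sum_positive: "positive_fun basis_sum"
  using finite_basis basis_nonempty basis_positive
  by (auto simp: positive_fun_def basis_sum_def intro!: sum_pos)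

lemma span_eval_bound:
  "\<exists>Y A. finite Y \<and> 0 \<le> A \<and> (\<forall>h\<in>fun_span T. \<forall>z. \<bar>h z\<bar> \<le> A * (\<Sum>y\<in>Y. \<bar>h y\<bar>) * basis_sum z)"
proof -
  have "(\<Sum>t\<in>T. \<bar>t z\<bar>) = basis_sum z" for z
    using basis_positive by (auto simp: basis_sum_def positive_fun_def less_imp_le intro!: sum.cong)
  then show ?thesis
    using fun_span_eval_bound[OF finite_basis] by simp
qed

lemma increment_in_span:
  assumes "harmonic \<mu> f" "positive_fun f"
  shows "(\<lambda>z. f (x + z) - f x) \<in> fun_span T"
proof -
  have "(\<lambda>z. f (x + z)) \<in> fun_span T"
    using assms by (intro positive_harmonic_in_span harmonic_translate) (auto simp: positive_fun_def)
  moreover have "(\<lambda>_. 1) \<in> fun_span T"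
    by (intro positive_harmonic_in_span harmonic_const) (simp add: positive_fun_def)
  ultimately have "(\<lambda>z. f (x + z)) - fun_scale (f x) (\<lambda>_. 1) \<in> fun_span T"
    by (intro fun_vec.span_diff fun_vec.span_scale)
  then show ?thesis
    by (simp add: fun_scale_apply fun_diff_def)
qed

lemma positive_harmonic_le_basis_sum:
  assumes "harmonic \<mu> f" "positive_fun f"
  shows "\<exists>A. 0 \<le> A \<and> (\<forall>x. f x \<le> A * basis_sum x)"
proof -
  obtain Y A where "0 \<le> A"
    and eval: "\<And>h z. h \<in> fun_span T \<Longrightarrow> \<bar>h z\<bar> \<le> A * (\<Sum>y\<in>Y. \<bar>h y\<bar>) * basis_sum z"
    using span_eval_bound by blast
  have "f x \<le> A * (\<Sum>y\<in>Y. \<bar>f y\<bar>) * basis_sum x" for x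
    using eval[OF positive_harmonic_in_span[OF assms], of x] by simp
  moreover have "0 \<le> A * (\<Sum>y\<in>Y. \<bar>f y\<bar>)"
    using \<open>0 \<le> A\<close> by (simp add: sum_nonneg)
  ultimately show ?thesis
    by blast
qed

text \<open>With \<open>z = -x\<close> and \<open>z = -x + y\<^sub>0\<close> the pointwise bound on the increments of \<open>f\<close> at \<open>x\<close>
  recovers \<open>f y\<^sub>0 - f 0\<close>; Harnack's inequality for the basis sum absorbs the shift by \<open>y\<^sub>0\<close>.\<close>
lemma increment_lower_bound:
  assumes f: "harmonic \<mu> f" "positive_fun f"
  shows "\<exists>Y B. finite Y \<and> (\<forall>x. basis_sum (- x) \<le> 4 * basis_sum 0
    \<longrightarrow> \<bar>f y0 - f 0\<bar> \<le> B * (\<Sum>y\<in>Y. \<bar>f (x + y) - f x\<bar>))"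
proof -
  obtain Y A where "finite Y" "0 \<le> A"
    and eval: "\<And>h z. h \<in> fun_span T \<Longrightarrow> \<bar>h z\<bar> \<le> A * (\<Sum>y\<in>Y. \<bar>h y\<bar>) * basis_sum z"
    using span_eval_bound by blast
  have "y0 \<in> sgrp_gen S"
    using generating by (simp add: generating_def)
  then obtain k c where "0 < c"
    and harnack: "\<forall>h x. (\<forall>z. 0 \<le> h z) \<longrightarrow> c * h (x + y0) \<le> markov_iter \<mu> k h x"
    using harnack_sgrp_gen by blast
  have "\<bar>f y0 - f 0\<bar> \<le> A * (1 / c + 1) * (4 * basis_sum 0) * (\<Sum>y\<in>Y. \<bar>f (x + y) - f x\<bar>)"
    if x: "basis_sum (- x) \<le> 4 * basis_sum 0" for x
  proof -
    define \<epsilon> where "\<epsilon> = (\<Sum>y\<in>Y. \<bar>f (x + y) - f x\<bar>)"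
    have incr: "\<bar>f (x + z) - f x\<bar> \<le> A * \<epsilon> * basis_sum z" for z
      using eval[OF increment_in_span[OF f, of x], of z] by (simp add: \<epsilon>_def)
    have "c * basis_sum (- x + y0) \<le> basis_sum (- x)"
      using harnack[rule_format, of basis_sum "- x"] basis_sum_positive
      by (simp add: markov_iter_harmonic[OF basis_sum_harmonic] positive_fun_def less_imp_le)
    then have "basis_sum (- x + y0) + basis_sum (- x) \<le> (1 / c + 1) * basis_sum (- x)"
      using \<open>0 < c\<close> by (simp add: field_simps)
    also have "\<dots> \<le> (1 / c + 1) * (4 * basis_sum 0)"
      using x \<open>0 < c\<close> by (intro mult_left_mono) simp_all
    finally have "basis_sum (- x + y0) + basis_sum (- x) \<le> (1 / c + 1) * (4 * basis_sum 0)" .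
    moreover have "0 \<le> A * \<epsilon>"
      using \<open>0 \<le> A\<close> by (simp add: \<epsilon>_def sum_nonneg)
    ultimately have "A * \<epsilon> * (basis_sum (- x + y0) + basis_sum (- x))
        \<le> A * \<epsilon> * ((1 / c + 1) * (4 * basis_sum 0))"
      by (rule mult_left_mono)
    moreover have "f y0 - f 0 = (f (x + (- x + y0)) - f x) - (f (x + - x) - f x)"
      by (simp add: add.assoc[symmetric])
    ultimately show ?thesis
      using incr[of "- x + y0"] incr[of "- x"] unfolding \<epsilon>_def by (simp add: algebra_simps)
  qed
  then show ?thesis
    using \<open>finite Y\<close> by blast
qed

lemma sq_diff_le_gain:
  assumes f: "harmonic \<mu> f" "positive_fun f"
  shows "\<exists>k K. \<forall>x. basis_sum x \<le> 4 * basis_sum 0 \<longrightarrow> basis_sum (- x) \<le> 4 * basis_sum 0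
    \<longrightarrow> (f y0 - f 0)^2 \<le> K * (markov_iter \<mu> k (inv_one_plus f) x - inv_one_plus f x)"
proof -
  define F0 where "F0 = basis_sum 0"
  obtain Y B where "finite Y"
    and lower: "\<And>x. basis_sum (- x) \<le> 4 * F0 \<Longrightarrow> \<bar>f y0 - f 0\<bar> \<le> B * (\<Sum>y\<in>Y. \<bar>f (x + y) - f x\<bar>)"
    using increment_lower_bound[OF f, of y0] unfolding F0_def by blast
  obtain A where "0 \<le> A" and f_le: "\<And>x. f x \<le> A * basis_sum x"
    using positive_harmonic_le_basis_sum[OF f] by blast
  obtain k C where "0 \<le> C" and control: "\<forall>y\<in>Y. gain_controls_increment f y k C"
    using gain_controls_increment_finite[OF f \<open>finite Y\<close>] generating by (auto simp: generating_def)
  define K where "K = B^2 * (real (card Y)^2 * (C * (1 + A * (4 * F0))^3))"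
  have "(f y0 - f 0)^2 \<le> K * (markov_iter \<mu> k (inv_one_plus f) x - inv_one_plus f x)"
    if x: "basis_sum x \<le> 4 * F0" "basis_sum (- x) \<le> 4 * F0" for x
  proof -
    define \<epsilon> where "\<epsilon> = (\<Sum>y\<in>Y. \<bar>f (x + y) - f x\<bar>)"
    have "\<bar>f y0 - f 0\<bar>^2 \<le> (B * \<epsilon>)^2"
      using lower[OF x(2)] unfolding \<epsilon>_def by (intro power_mono) simp_all
    moreover have "f x \<le> A * (4 * F0)"
      using f_le[of x] mult_left_mono[OF x(1) \<open>0 \<le> A\<close>] by linarith
    then have "\<epsilon>^2 \<le> real (card Y)^2 * (C * (1 + A * (4 * F0))^3)
        * (markov_iter \<mu> k (inv_one_plus f) x - inv_one_plus f x)"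
      unfolding \<epsilon>_def using \<open>0 \<le> C\<close> control \<open>finite Y\<close>
      by (intro sum_increments_sq_le[OF f]) auto
    then have "B^2 * \<epsilon>^2 \<le> K * (markov_iter \<mu> k (inv_one_plus f) x - inv_one_plus f x)"
      unfolding K_def mult.assoc by (intro mult_left_mono) simp_all
    ultimately show ?thesis
      by (simp add: power_mult_distrib)
  qed
  then show ?thesis
    unfolding F0_def by blast
qed

lemma gain_lower_bound:
  assumes f: "harmonic \<mu> f" "positive_fun f" and "f y0 \<noteq> f 0"
  shows "\<exists>k \<rho>. 0 < \<rho> \<and> (\<forall>x. basis_sum x \<le> 4 * basis_sum 0 \<longrightarrow> basis_sum (- x) \<le> 4 * basis_sum 0
    \<longrightarrow> \<rho> \<le> markov_iter \<mu> k (inv_one_plus f) x - inv_one_plus f x)"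
proof -
  define G where "G k x = markov_iter \<mu> k (inv_one_plus f) x - inv_one_plus f x" for k x
  obtain k K where bound: "\<And>x. basis_sum x \<le> 4 * basis_sum 0 \<Longrightarrow> basis_sum (- x) \<le> 4 * basis_sum 0
      \<Longrightarrow> (f y0 - f 0)^2 \<le> K * G k x"
    using sq_diff_le_gain[OF f, of y0] unfolding G_def by blast
  have "0 < (f y0 - f 0)^2"
    using \<open>f y0 \<noteq> f 0\<close> by simp
  moreover have "(f y0 - f 0)^2 \<le> K * G k 0"
    using bound[of 0] basis_sum_positive by (simp add: positive_fun_def less_imp_le)
  ultimately have "0 < K * G k 0"
    by linarith
  then have "0 < K"
    using gain_nonneg[OF f, of k 0] by (auto simp: G_def zero_less_mult_iff)
  then have "(f y0 - f 0)^2 / K \<le> G k x"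
    if "basis_sum x \<le> 4 * basis_sum 0" "basis_sum (- x) \<le> 4 * basis_sum 0" for x
    using bound[OF that] by (simp add: pos_divide_le_eq mult.commute)
  moreover have "0 < (f y0 - f 0)^2 / K"
    using \<open>0 < (f y0 - f 0)^2\<close> \<open>0 < K\<close> by simp
  ultimately show ?thesis
    unfolding G_def by blast
qed

lemma positive_harmonic_constant:
  assumes "harmonic \<mu> f" "positive_fun f"
  shows "f x = f y"
proof (rule ccontr)
  assume "f x \<noteq> f y"
  then obtain y0 where "f y0 \<noteq> f 0"
    by metis
  then obtain k \<rho> where "0 < \<rho>" "\<And>x. basis_sum x \<le> 4 * basis_sum 0 \<Longrightarrow> basis_sum (- x) \<le> 4 * basis_sum 0
      \<Longrightarrow> \<rho> \<le> markov_iter \<mu> k (inv_one_plus f) x - inv_one_plus f x"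
    using gain_lower_bound[OF assms] by blast
  then show False
    using no_uniform_gain[OF basis_sum_harmonic basis_sum_positive assms] by blast
qed

end

theorem proposition8p3:
  fixes \<mu> :: "'a::group_add \<Rightarrow> real"
  assumes "prob_measure_on_group \<mu>"
    and "symmetric_meas \<mu>"
    and "generating \<mu>"
    and "\<exists>f. harmonic \<mu> f \<and> positive_fun f \<and> (\<exists>x y. f x \<noteq> f y)"
  shows "infinite_dimensional_span {f. harmonic \<mu> f \<and> positive_fun f}"
proof (rule ccontr)
  let ?P = "{f. harmonic \<mu> f \<and> positive_fun f}"
  assume "\<not> infinite_dimensional_span ?P"
  then obtain B where "finite B" "fun_span ?P \<subseteq> fun_span B"
    unfolding infinite_dimensional_span_def by blast
  obtain T where T: "T \<subseteq> ?P" "fun_vec.independent T" "?P \<subseteq> fun_span T"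
    using fun_vec.maximal_independent_subset by blast
  have "finite T"
    using T(1,2) \<open>fun_span ?P \<subseteq> fun_span B\<close> fun_vec.span_superset
    by (intro fun_vec.independent_span_bound[OF \<open>finite B\<close>, THEN conjunct1]) blast+
  then interpret positive_harmonic_basis \<mu> T
    using assms(1-3) T by unfold_locales auto
  show False
    using assms(4) positive_harmonic_constant by blast
qed

end
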